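(* Let $G$ be a connected graph and let $H$ be a graph (not necessarily connected) that is not complete. Then $$\dim_{n\ell}(G\odot H)=n(G)\cdot \dim_{n\ell}(H+K_1).$$
   Context: Graphs are finite and simple; $d(u,v)$ is the shortest-path distance and $n(G)$ the number of vertices. A set $X\subseteq V(G)$ resolves two vertices $u,v$ if some $x\in X$ satisfies $d(u,x)\neq d(v,x)$. $X$ is a nonlocal resolving set of a connected graph if it resolves every pair of distinct non-adjacent vertices; the nonlocal metric dimension $\dim_{n\ell}$ is the minimum size of a nonlocal resolving set. The join $G+H$ is obtained from disjoint copies of $G$ and $H$ by adding all edges between them. For $V(G)=\{g_1,\dots,g_{n(G)}\}$, the corona product $G\odot H$ is obtained from the disjoint union of $G$ and $n(G)$ copies $H_1,\dots,H_{n(G)}$ of $H$ by joining $g_i$ to every vertex of $H_i$ for each $i$. *)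

theory Defs
  imports Main
begin

type_synonym 'a graph = "'a set \<times> ('a \<Rightarrow> 'a \<Rightarrow> bool)"

definition verts :: "'a graph \<Rightarrow> 'a set" where "verts G = fst G"
definition adj :: "'a graph \<Rightarrow> 'a \<Rightarrow> 'a \<Rightarrow> bool" where "adj G = snd G"

definition simple_graph :: "'a graph \<Rightarrow> bool" where
  "simple_graph G \<longleftrightarrow> finite (verts G) \<and>
     (\<forall>u v. adj G u v \<longrightarrow> u \<in> verts G \<and> v \<in> verts G \<and> u \<noteq> v \<and> adj G v u)"

fun walk_in :: "'a graph \<Rightarrow> 'a list \<Rightarrow> bool" where
  "walk_in G [] = False"
| "walk_in G [v] = (v \<in> verts G)"
| "walk_in G (u # v # xs) = (adj G u v \<and> walk_in G (v # xs))"

definition dist :: "'a graph \<Rightarrow> 'a \<Rightarrow> 'a \<Rightarrow> nat" where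
  "dist G u v = (LEAST n. \<exists>p. walk_in G p \<and> hd p = u \<and> last p = v \<and> length p = Suc n)"

definition connected_graph :: "'a graph \<Rightarrow> bool" where
  "connected_graph G \<longleftrightarrow> verts G \<noteq> {} \<and>
     (\<forall>u\<in>verts G. \<forall>v\<in>verts G. \<exists>p. walk_in G p \<and> hd p = u \<and> last p = v)"

definition complete_graph :: "'a graph \<Rightarrow> bool" where
  "complete_graph G \<longleftrightarrow> (\<forall>u\<in>verts G. \<forall>v\<in>verts G. u \<noteq> v \<longrightarrow> adj G u v)"

definition resolves :: "'a graph \<Rightarrow> 'a set \<Rightarrow> 'a \<Rightarrow> 'a \<Rightarrow> bool" where
  "resolves G X u v \<longleftrightarrow> (\<exists>x\<in>X. dist G u x \<noteq> dist G v x)"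

definition nonlocal_resolving_set :: "'a graph \<Rightarrow> 'a set \<Rightarrow> bool" where
  "nonlocal_resolving_set G X \<longleftrightarrow> X \<subseteq> verts G \<and>
     (\<forall>u\<in>verts G. \<forall>v\<in>verts G. u \<noteq> v \<and> \<not> adj G u v \<longrightarrow> resolves G X u v)"

definition nl_dim :: "'a graph \<Rightarrow> nat" where
  "nl_dim G = (LEAST k. \<exists>X. nonlocal_resolving_set G X \<and> card X = k)"

definition join :: "'a graph \<Rightarrow> 'b graph \<Rightarrow> ('a + 'b) graph" where
  "join G H = (Inl ` verts G \<union> Inr ` verts H,
     (\<lambda>x y. case (x, y) of
        (Inl a, Inl b) \<Rightarrow> adj G a b
      | (Inr a, Inr b) \<Rightarrow> adj H a b
      | (Inl a, Inr b) \<Rightarrow> a \<in> verts G \<and> b \<in> verts H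
      | (Inr a, Inl b) \<Rightarrow> a \<in> verts H \<and> b \<in> verts G))"

definition K1 :: "unit graph" where
  "K1 = ({()}, \<lambda>_ _. False)"

text \<open>Corona G \<odot> H: vertex Inl g is g; vertex Inr (g, h) is the copy of h in H_g.\<close>
definition corona :: "'a graph \<Rightarrow> 'b graph \<Rightarrow> ('a + 'a \<times> 'b) graph" where
  "corona G H = (Inl ` verts G \<union> Inr ` (verts G \<times> verts H),
     (\<lambda>x y. case (x, y) of
        (Inl a, Inl b) \<Rightarrow> adj G a b
      | (Inr (g, h), Inr (g', h')) \<Rightarrow> g = g' \<and> g \<in> verts G \<and> adj H h h'
      | (Inl a, Inr (g, h)) \<Rightarrow> a = g \<and> a \<in> verts G \<and> h \<in> verts H
      | (Inr (g, h), Inl a) \<Rightarrow> a = g \<and> a \<in> verts G \<and> h \<in> verts H))"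

end

theory Submission
  imports Defs
begin

text \<open>
  Inside H + K1, and inside each copy H_g of G \<odot> H, two vertices of H are at distance
  0, 1 or 2, the apex (resp. g) being a common neighbour. The apex is equidistant from all
  of H, and g is a cut vertex separating H_g from the rest of G \<odot> H, so every vertex
  outside H_g is equidistant from all of H_g. Hence in both graphs only landmarks inside
  the copies of H help, and each copy needs a set resolving its non-adjacent pairs with
  respect to this capped distance. Conversely, such a set placed in every copy resolves all
  of G \<odot> H: two vertices hanging at different vertices of G are separated by a landmark
  in the copy of one of them, since leaving a copy costs an extra step. Non-completeness of
  H makes these sets nonempty, so that every copy does contain a landmark.
\<close>

definition reachable :: "'a graph \<Rightarrow> 'a \<Rightarrow> 'a \<Rightarrow> bool" where
  "reachable G u v \<longleftrightarrow> (\<exists>p. walk_in G p \<and> hd p = u \<and> last p = v)"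

lemma walk_in_nonempty: "walk_in G p \<Longrightarrow> p \<noteq> []"
  by (cases p) auto

lemma walk_in_append:
  "walk_in G (xs @ [v]) \<Longrightarrow> walk_in G (v # ys) \<Longrightarrow> walk_in G (xs @ v # ys)"
  by (induction xs rule: induct_list012) auto

lemma walk_in_suffix: "walk_in G (xs @ ys) \<Longrightarrow> ys \<noteq> [] \<Longrightarrow> walk_in G ys"
proof (induction xs)
  case (Cons a xs)
  then show ?case by (cases "xs @ ys") auto
qed simp

lemma walk_in_rev: "simple_graph G \<Longrightarrow> walk_in G p \<Longrightarrow> walk_in G (rev p)"
proof (induction G p rule: walk_in.induct)
  case (3 G u v xs)
  then have "walk_in G (rev xs @ [v])" and "walk_in G [v, u]"
    by (auto simp: simple_graph_def)
  then show ?case using walk_in_append by fastforce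
qed auto

lemma reachable_refl: "u \<in> verts G \<Longrightarrow> reachable G u u"
  unfolding reachable_def by (rule exI[of _ "[u]"]) simp

lemma reachable_adj: "adj G u v \<Longrightarrow> v \<in> verts G \<Longrightarrow> reachable G u v"
  unfolding reachable_def by (rule exI[of _ "[u, v]"]) simp

lemma reachable_sym: "simple_graph G \<Longrightarrow> reachable G u v \<Longrightarrow> reachable G v u"
  unfolding reachable_def by (metis walk_in_rev hd_rev last_rev)

lemma reachable_trans:
  assumes "reachable G u v" and "reachable G v w"
  shows "reachable G u w"
proof -
  obtain p where p: "walk_in G p" "hd p = u" "last p = v"
    using assms(1) reachable_def by metis
  obtain q where q: "walk_in G q" "hd q = v" "last q = w"
    using assms(2) reachable_def by metis
  have p_eq: "p = butlast p @ [v]" and q_eq: "q = v # tl q"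
    using p q walk_in_nonempty by (metis append_butlast_last_id, metis list.collapse)
  have "walk_in G (butlast p @ v # tl q)"
    using walk_in_append p q p_eq q_eq by metis
  moreover have "hd (butlast p @ v # tl q) = u"
    using p p_eq by (metis hd_append list.sel(1))
  moreover have "last (butlast p @ v # tl q) = w"
    using q q_eq by (metis last_appendR list.distinct(1))
  ultimately show ?thesis
    unfolding reachable_def by blast
qed

lemma dist_le_walk:
  assumes "walk_in G p" "hd p = u" "last p = v"
  shows "dist G u v \<le> length p - 1"
proof -
  have "length p = Suc (length p - 1)"
    using walk_in_nonempty[OF assms(1)] by (cases p) auto
  then show ?thesis
    unfolding dist_def using assms by (intro Least_le) blast
qed

lemma shortest_walk_exists:
  assumes "reachable G u v"
  obtains p where "walk_in G p" "hd p = u" "last p = v" "length p = Suc (dist G u v)"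
proof -
  obtain p where p: "walk_in G p" "hd p = u" "last p = v"
    using assms unfolding reachable_def by blast
  have "length p = Suc (length p - 1)"
    using walk_in_nonempty[OF p(1)] by (cases p) auto
  then have "\<exists>n p. walk_in G p \<and> hd p = u \<and> last p = v \<and> length p = Suc n"
    using p by blast
  from LeastI_ex[OF this] show ?thesis
    using that unfolding dist_def by blast
qed

lemma dist_eq_0_imp_eq: "reachable G u v \<Longrightarrow> dist G u v = 0 \<Longrightarrow> u = v"
  by (erule shortest_walk_exists) (auto simp: length_Suc_conv)

lemma dist_eq_1_imp_adj: "reachable G u v \<Longrightarrow> dist G u v = 1 \<Longrightarrow> adj G u v"
  by (erule shortest_walk_exists) (auto simp: length_Suc_conv)

lemma dist_self: "u \<in> verts G \<Longrightarrow> dist G u u = 0"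
  using dist_le_walk[of G "[u]" u u] by simp

lemma dist_adj: "adj G u v \<Longrightarrow> v \<in> verts G \<Longrightarrow> u \<noteq> v \<Longrightarrow> dist G u v = 1"
  using dist_le_walk[of G "[u, v]" u v] dist_eq_0_imp_eq[OF reachable_adj, of G u v]
  by fastforce

lemma dist_sym:
  assumes "simple_graph G"
  shows "dist G u v = dist G v u"
proof -
  have le: "dist G u v \<le> dist G v u" if reach: "reachable G v u" for u v
  proof -
    obtain p where p: "walk_in G p" "hd p = v" "last p = u" "length p = Suc (dist G v u)"
      using reach by (rule shortest_walk_exists)
    have "dist G u v \<le> length (rev p) - 1"
      using p walk_in_rev[OF assms p(1)] walk_in_nonempty[OF p(1)]
      by (intro dist_le_walk) (auto simp: hd_rev last_rev)
    with p show ?thesis by simp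
  qed
  show ?thesis
  proof (cases "reachable G v u")
    case True
    then show ?thesis
      using le reachable_sym[OF assms] by (simp add: le_antisym)
  next
    case False
    then have "\<not> reachable G u v"
      using reachable_sym[OF assms] by blast
    with False show ?thesis
      unfolding dist_def reachable_def by metis
  qed
qed

lemma walk_in_leaving_set_passes_gate:
  assumes gate: "\<forall>a\<in>S. \<forall>b. adj G a b \<longrightarrow> b \<in> S \<or> b = g"
  shows "walk_in G p \<Longrightarrow> hd p \<in> S \<Longrightarrow> last p \<notin> S \<Longrightarrow> g \<in> set p"
proof (induction p rule: induct_list012)
  case (3 u v xs)
  then have "v \<in> S \<Longrightarrow> g \<in> set (v # xs)" by simp
  with 3 gate show ?case by auto
qed auto

lemma dist_through_gate:
  assumes gate: "\<forall>a\<in>S. \<forall>b. adj G a b \<longrightarrow> b \<in> S \<or> b = g"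
    and "g \<notin> S" "u \<in> S" "x \<notin> S" "adj G u g" "g \<in> verts G" "reachable G g x"
  shows "dist G u x = Suc (dist G g x)"
proof (rule antisym)
  obtain q where q: "walk_in G q" "hd q = g" "last q = x" "length q = Suc (dist G g x)"
    using assms(7) by (rule shortest_walk_exists)
  then obtain ys where "q = g # ys"
    by (metis list.collapse walk_in_nonempty)
  with q assms(5) have "walk_in G (u # g # ys)" "last (u # g # ys) = x"
    by simp_all
  from dist_le_walk[OF this(1) _ this(2)] q(4) \<open>q = g # ys\<close>
  show "dist G u x \<le> Suc (dist G g x)" by simp
next
  from reachable_trans[OF reachable_adj[OF assms(5,6)] assms(7)]
  obtain p where p: "walk_in G p" "hd p = u" "last p = x" "length p = Suc (dist G u x)"
    by (rule shortest_walk_exists)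
  have "g \<in> set p"
    using walk_in_leaving_set_passes_gate[OF gate p(1)] p assms by simp
  then obtain xs ys where p_eq: "p = xs @ g # ys"
    by (meson split_list)
  with p(2) assms(2,3) have "xs \<noteq> []" by auto
  have "walk_in G (g # ys)" "last (g # ys) = x"
    using walk_in_suffix[of G xs "g # ys"] p p_eq by auto
  then have "dist G g x \<le> length ys"
    using dist_le_walk[of G "g # ys" g x] by simp
  moreover have "length p = length xs + Suc (length ys)" "length xs \<noteq> 0"
    using p_eq \<open>xs \<noteq> []\<close> by simp_all
  ultimately show "Suc (dist G g x) \<le> dist G u x"
    using p(4) by linarith
qed

definition capped_dist :: "'a graph \<Rightarrow> 'a \<Rightarrow> 'a \<Rightarrow> nat" where
  "capped_dist G u v = (if u = v then 0 else if adj G u v then 1 else 2)"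

lemma capped_dist_le_2: "capped_dist G u v \<le> 2"
  by (simp add: capped_dist_def)

lemma dist_eq_capped_dist:
  assumes "simple_graph G" "u \<in> verts G" "v \<in> verts G"
    and "adj G u w" "adj G w v"
  shows "dist G u v = capped_dist G u v"
proof -
  have walk: "walk_in G [u, w, v]"
    using assms by simp
  then have reach: "reachable G u v"
    unfolding reachable_def by (intro exI[of _ "[u, w, v]"]) simp
  have "dist G u v \<le> 2"
    using dist_le_walk[of G "[u, w, v]" u v] walk by simp
  then consider "dist G u v = 0" | "dist G u v = 1" | "dist G u v = 2"
    by linarith
  moreover have "adj G u v \<Longrightarrow> u \<noteq> v"
    using assms(1) by (auto simp: simple_graph_def)
  ultimately show ?thesis
    using dist_self[OF assms(2)] dist_adj[OF _ assms(3)]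
      dist_eq_0_imp_eq[OF reach] dist_eq_1_imp_adj[OF reach]
    unfolding capped_dist_def by cases auto
qed

lemma nonlocal_resolving_set_finite:
  "simple_graph G \<Longrightarrow> nonlocal_resolving_set G X \<Longrightarrow> finite X"
  unfolding simple_graph_def nonlocal_resolving_set_def by (meson finite_subset)

lemma resolves_commute: "resolves G X u v \<longleftrightarrow> resolves G X v u"
  unfolding resolves_def by (metis (full_types))

lemma nl_dim_eqI:
  assumes "nonlocal_resolving_set G X" "card X = k"
    and "\<And>X. nonlocal_resolving_set G X \<Longrightarrow> k \<le> card X"
  shows "nl_dim G = k"
  unfolding nl_dim_def using assms by (intro Least_equality) auto

definition capped_resolving_set :: "'a graph \<Rightarrow> 'a set \<Rightarrow> bool" where
  "capped_resolving_set H Y \<longleftrightarrow> Y \<subseteq> verts H \<and>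
     (\<forall>a\<in>verts H. \<forall>b\<in>verts H. a \<noteq> b \<and> \<not> adj H a b \<longrightarrow>
        (\<exists>y\<in>Y. capped_dist H a y \<noteq> capped_dist H b y))"

definition capped_dim :: "'a graph \<Rightarrow> nat" where
  "capped_dim H = (LEAST k. \<exists>Y. capped_resolving_set H Y \<and> card Y = k)"

lemma capped_resolving_set_verts: "capped_resolving_set H (verts H)"
  unfolding capped_resolving_set_def capped_dist_def by (auto intro!: bexI)

lemma capped_dim_le: "capped_resolving_set H Y \<Longrightarrow> capped_dim H \<le> card Y"
  unfolding capped_dim_def by (intro Least_le) blast

lemma capped_dim_attained:
  obtains Y where "capped_resolving_set H Y" "card Y = capped_dim H"
proof -
  have "\<exists>k Y. capped_resolving_set H Y \<and> card Y = k"
    using capped_resolving_set_verts by blast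
  from LeastI_ex[OF this] show ?thesis
    using that unfolding capped_dim_def by blast
qed

lemma capped_resolving_set_nonempty:
  "\<not> complete_graph H \<Longrightarrow> capped_resolving_set H Y \<Longrightarrow> Y \<noteq> {}"
  unfolding complete_graph_def capped_resolving_set_def by blast

lemma verts_join_K1: "verts (join H K1) = Inl ` verts H \<union> {Inr ()}"
  by (simp add: join_def verts_def K1_def)

lemma adj_join_K1 [simp]:
  "adj (join H K1) (Inl a) (Inl b) = adj H a b"
  "adj (join H K1) (Inr u) (Inr v) = False"
  "adj (join H K1) (Inl a) (Inr u) = (a \<in> verts H)"
  "adj (join H K1) (Inr u) (Inl a) = (a \<in> verts H)"
  by (simp_all add: join_def adj_def K1_def verts_def)

lemma simple_graph_join_K1:
  assumes "simple_graph H"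
  shows "simple_graph (join H K1)"
proof -
  have "u \<in> verts (join H K1) \<and> v \<in> verts (join H K1) \<and> u \<noteq> v \<and> adj (join H K1) v u"
    if "adj (join H K1) u v" for u v
    using assms that by (cases u; cases v) (auto simp: simple_graph_def verts_join_K1)
  moreover have "finite (verts (join H K1))"
    using assms by (simp add: simple_graph_def verts_join_K1)
  ultimately show ?thesis
    unfolding simple_graph_def by blast
qed

lemma dist_join_K1_Inl:
  assumes "simple_graph H" "a \<in> verts H" "y \<in> verts H"
  shows "dist (join H K1) (Inl a) (Inl y) = capped_dist H a y"
  using dist_eq_capped_dist[OF simple_graph_join_K1[OF assms(1)], of "Inl a" "Inl y" "Inr ()"] assms
  by (simp add: verts_join_K1 capped_dist_def)

lemma dist_join_K1_apex:
  "a \<in> verts H \<Longrightarrow> dist (join H K1) (Inl a) (Inr ()) = 1"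
  by (rule dist_adj) (auto simp: verts_join_K1)

lemma capped_resolving_set_vimage_Inl:
  assumes "simple_graph H" "nonlocal_resolving_set (join H K1) X"
  shows "capped_resolving_set H (Inl -` X)"
  unfolding capped_resolving_set_def
proof (intro conjI ballI impI)
  show "Inl -` X \<subseteq> verts H"
    using assms(2) by (auto simp: nonlocal_resolving_set_def verts_join_K1)
  fix a b
  assume ab: "a \<in> verts H" "b \<in> verts H" "a \<noteq> b \<and> \<not> adj H a b"
  then have "resolves (join H K1) X (Inl a) (Inl b)"
    using assms(2) by (auto simp: nonlocal_resolving_set_def verts_join_K1)
  then obtain x where x: "x \<in> X" "dist (join H K1) (Inl a) x \<noteq> dist (join H K1) (Inl b) x"
    unfolding resolves_def by blast
  moreover have "x \<in> Inl ` verts H \<union> {Inr ()}"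
    using x assms(2) by (auto simp: nonlocal_resolving_set_def verts_join_K1)
  ultimately show "\<exists>y\<in>Inl -` X. capped_dist H a y \<noteq> capped_dist H b y"
    using ab dist_join_K1_Inl[OF assms(1)] dist_join_K1_apex[of _ H] by auto
qed

lemma nonlocal_resolving_set_join_K1:
  assumes "simple_graph H" "capped_resolving_set H Y"
  shows "nonlocal_resolving_set (join H K1) (Inl ` Y)"
  unfolding nonlocal_resolving_set_def
proof (intro conjI ballI impI)
  have Y: "Y \<subseteq> verts H"
    using assms(2) by (simp add: capped_resolving_set_def)
  then show "Inl ` Y \<subseteq> verts (join H K1)"
    by (auto simp: verts_join_K1)
  fix u v
  assume uv: "u \<in> verts (join H K1)" "v \<in> verts (join H K1)" "u \<noteq> v \<and> \<not> adj (join H K1) u v"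
  then obtain a b where ab: "u = Inl a" "v = Inl b" "a \<in> verts H" "b \<in> verts H"
    by (auto simp: verts_join_K1)
  moreover have "a \<noteq> b" "\<not> adj H a b"
    using uv ab by auto
  ultimately obtain y where "y \<in> Y" "capped_dist H a y \<noteq> capped_dist H b y"
    using assms(2) unfolding capped_resolving_set_def by blast
  with Y ab show "resolves (join H K1) (Inl ` Y) u v"
    unfolding resolves_def using dist_join_K1_Inl[OF assms(1)] by (intro bexI[of _ "Inl y"]) auto
qed

lemma nl_dim_join_K1:
  assumes "simple_graph H"
  shows "nl_dim (join H K1) = capped_dim H"
proof -
  obtain Y where Y: "capped_resolving_set H Y" "card Y = capped_dim H"
    by (rule capped_dim_attained)
  show ?thesis
  proof (rule nl_dim_eqI)
    show "nonlocal_resolving_set (join H K1) (Inl ` Y)"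
      using nonlocal_resolving_set_join_K1[OF assms Y(1)] .
    show "card (Inl ` Y) = capped_dim H"
      using Y(2) by (simp add: card_image)
  next
    fix X
    assume X: "nonlocal_resolving_set (join H K1) X"
    have "capped_dim H \<le> card (Inl -` X)"
      by (rule capped_dim_le[OF capped_resolving_set_vimage_Inl[OF assms X]])
    also have "\<dots> \<le> card X"
      using nonlocal_resolving_set_finite[OF simple_graph_join_K1[OF assms] X]
      by (intro card_inj_on_le[of Inl]) auto
    finally show "capped_dim H \<le> card X" .
  qed
qed

lemma verts_corona: "verts (corona G H) = Inl ` verts G \<union> Inr ` (verts G \<times> verts H)"
  by (simp add: corona_def verts_def)

lemma adj_corona [simp]:
  "adj (corona G H) (Inl a) (Inl b) = adj G a b"
  "adj (corona G H) (Inr (g, h)) (Inr (g', h')) = (g = g' \<and> g \<in> verts G \<and> adj H h h')"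
  "adj (corona G H) (Inl a) (Inr (g, h)) = (a = g \<and> a \<in> verts G \<and> h \<in> verts H)"
  "adj (corona G H) (Inr (g, h)) (Inl a) = (a = g \<and> a \<in> verts G \<and> h \<in> verts H)"
  by (simp_all add: corona_def adj_def)

lemma simple_graph_corona:
  assumes "simple_graph G" "simple_graph H"
  shows "simple_graph (corona G H)"
proof -
  have "u \<in> verts (corona G H) \<and> v \<in> verts (corona G H) \<and> u \<noteq> v \<and> adj (corona G H) v u"
    if "adj (corona G H) u v" for u v
    using assms that by (cases u; cases v) (fastforce simp: simple_graph_def verts_corona)+
  moreover have "finite (verts (corona G H))"
    using assms by (simp add: simple_graph_def verts_corona)
  ultimately show ?thesis
    unfolding simple_graph_def by blast
qed

lemma walk_in_corona_Inl: "walk_in G p \<Longrightarrow> walk_in (corona G H) (map Inl p)"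
  by (induction G p rule: walk_in.induct) (auto simp: verts_corona)

lemma reachable_corona_Inl: "reachable G a b \<Longrightarrow> reachable (corona G H) (Inl a) (Inl b)"
  unfolding reachable_def by (metis walk_in_corona_Inl walk_in_nonempty hd_map last_map)

context
  fixes G :: "'a graph" and H :: "'b graph"
  assumes simple_G: "simple_graph G" and connected_G: "connected_graph G"
    and simple_H: "simple_graph H"
begin

lemma reachable_corona:
  assumes "w \<in> verts (corona G H)" "z \<in> verts (corona G H)"
  shows "reachable (corona G H) w z"
proof -
  have to_root: "\<exists>g\<in>verts G. reachable (corona G H) w (Inl g)"
    if "w \<in> verts (corona G H)" for w
  proof -
    from that consider g where "w = Inl g" "g \<in> verts G"
      | g h where "w = Inr (g, h)" "g \<in> verts G" "h \<in> verts H"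
      by (auto simp: verts_corona)
    then show ?thesis
    proof cases
      case (1 g)
      then show ?thesis
        using reachable_refl[of w "corona G H"]
        by (intro bexI[of _ g]) (simp_all add: verts_corona)
    next
      case (2 g h)
      then show ?thesis
        using reachable_adj[of "corona G H" w "Inl g"]
        by (intro bexI[of _ g]) (simp_all add: verts_corona)
    qed
  qed
  have between_roots: "reachable (corona G H) (Inl a) (Inl b)"
    if "a \<in> verts G" "b \<in> verts G" for a b
    using connected_G that unfolding connected_graph_def
    by (intro reachable_corona_Inl) (simp add: reachable_def)
  obtain a where a: "a \<in> verts G" "reachable (corona G H) w (Inl a)"
    using to_root assms(1) by blast
  obtain b where b: "b \<in> verts G" "reachable (corona G H) z (Inl b)"
    using to_root assms(2) by blast
  show ?thesis
    using reachable_trans[OF reachable_trans[OF a(2) between_roots[OF a(1) b(1)]]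
        reachable_sym[OF simple_graph_corona[OF simple_G simple_H] b(2)]] .
qed

lemma dist_corona_leave_copy:
  assumes "g \<in> verts G" "h \<in> verts H" "x \<in> verts (corona G H)" "\<forall>h'. x \<noteq> Inr (g, h')"
  shows "dist (corona G H) (Inr (g, h)) x = Suc (dist (corona G H) (Inl g) x)"
proof (rule dist_through_gate[where S = "Inr ` ({g} \<times> verts H)"])
  show "\<forall>a\<in>Inr ` ({g} \<times> verts H). \<forall>b. adj (corona G H) a b \<longrightarrow>
    b \<in> Inr ` ({g} \<times> verts H) \<or> b = Inl g"
  proof (intro ballI allI impI)
    fix a b
    assume "a \<in> Inr ` ({g} \<times> verts H)" "adj (corona G H) a b"
    then show "b \<in> Inr ` ({g} \<times> verts H) \<or> b = Inl g"
      using simple_H by (cases b) (auto simp: simple_graph_def)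
  qed
  show "reachable (corona G H) (Inl g) x"
    using reachable_corona assms by (simp add: verts_corona)
qed (use assms in \<open>auto simp: verts_corona\<close>)

lemma dist_corona_enter_copy:
  assumes "g \<in> verts G" "h \<in> verts H" "x \<in> verts (corona G H)" "\<forall>h'. x \<noteq> Inr (g, h')"
  shows "dist (corona G H) x (Inr (g, h)) = Suc (dist (corona G H) x (Inl g))"
  using dist_corona_leave_copy[OF assms] dist_sym[OF simple_graph_corona[OF simple_G simple_H]]
  by metis

lemma dist_corona_copy:
  assumes "g \<in> verts G" "a \<in> verts H" "y \<in> verts H"
  shows "dist (corona G H) (Inr (g, a)) (Inr (g, y)) = capped_dist H a y"
  using dist_eq_capped_dist[OF simple_graph_corona[OF simple_G simple_H],
      of "Inr (g, a)" "Inr (g, y)" "Inl g"] assms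
  by (simp add: verts_corona capped_dist_def)

lemma dist_corona_root_copy:
  "g \<in> verts G \<Longrightarrow> y \<in> verts H \<Longrightarrow> dist (corona G H) (Inl g) (Inr (g, y)) = 1"
  by (rule dist_adj) (auto simp: verts_corona)

lemma dist_corona_other_to_copy:
  assumes "g \<in> verts G" "y \<in> verts H" "x \<in> verts (corona G H)"
    and "x \<noteq> Inl g" "\<forall>h'. x \<noteq> Inr (g, h')"
  shows "2 \<le> dist (corona G H) x (Inr (g, y))"
proof -
  have "dist (corona G H) x (Inl g) \<noteq> 0"
    using dist_eq_0_imp_eq reachable_corona assms by (metis Un_iff image_eqI verts_corona)
  then show ?thesis
    using dist_corona_enter_copy[OF assms(1-3,5)] by simp
qed

lemma dist_corona_between_copies:
  assumes "g \<in> verts G" "g' \<in> verts G" "g \<noteq> g'" "b \<in> verts H" "y \<in> verts H"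
  shows "3 \<le> dist (corona G H) (Inr (g', b)) (Inr (g, y))"
proof -
  have "reachable (corona G H) (Inl g') (Inl g)"
    using reachable_corona assms by (simp add: verts_corona)
  then have "dist (corona G H) (Inl g') (Inl g) \<noteq> 0"
    using dist_eq_0_imp_eq assms(3) by fastforce
  moreover have
    "dist (corona G H) (Inr (g', b)) (Inl g) = Suc (dist (corona G H) (Inl g') (Inl g))"
    using dist_corona_leave_copy assms by (simp add: verts_corona)
  ultimately show ?thesis
    using dist_corona_enter_copy[of g y "Inr (g', b)"] assms by (simp add: verts_corona)
qed

lemma capped_resolving_set_corona_copy:
  assumes "nonlocal_resolving_set (corona G H) X" "g \<in> verts G"
  shows "capped_resolving_set H {h. Inr (g, h) \<in> X}"
  unfolding capped_resolving_set_def
proof (intro conjI ballI impI)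
  show "{h. Inr (g, h) \<in> X} \<subseteq> verts H"
    using assms by (auto simp: nonlocal_resolving_set_def verts_corona)
  fix a b
  assume ab: "a \<in> verts H" "b \<in> verts H" "a \<noteq> b \<and> \<not> adj H a b"
  then have "resolves (corona G H) X (Inr (g, a)) (Inr (g, b))"
    using assms by (auto simp: nonlocal_resolving_set_def verts_corona)
  then obtain x where x: "x \<in> X"
    "dist (corona G H) (Inr (g, a)) x \<noteq> dist (corona G H) (Inr (g, b)) x"
    unfolding resolves_def by blast
  have x_vert: "x \<in> verts (corona G H)"
    using x(1) assms(1) by (auto simp: nonlocal_resolving_set_def)
  have "\<exists>y. x = Inr (g, y)"
  proof (rule ccontr)
    assume "\<nexists>y. x = Inr (g, y)"
    then show False
      using x(2) dist_corona_leave_copy[OF assms(2) ab(1) x_vert]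
        dist_corona_leave_copy[OF assms(2) ab(2) x_vert] by auto
  qed
  then obtain y where "x = Inr (g, y)" "y \<in> verts H"
    using x_vert by (auto simp: verts_corona)
  with x ab show "\<exists>y\<in>{h. Inr (g, h) \<in> X}. capped_dist H a y \<noteq> capped_dist H b y"
    using dist_corona_copy[OF assms(2)] by auto
qed

lemma resolves_corona_root:
  assumes "Y \<subseteq> verts H" "y0 \<in> Y" "g \<in> verts G" "v \<in> verts (corona G H)"
    and "v \<noteq> Inl g" "\<not> adj (corona G H) (Inl g) v"
  shows "resolves (corona G H) (Inr ` (verts G \<times> Y)) (Inl g) v"
proof -
  have y0: "y0 \<in> verts H"
    using assms(1,2) by blast
  have "\<forall>h. v \<noteq> Inr (g, h)"
    using assms by (auto simp: verts_corona)
  then have "2 \<le> dist (corona G H) v (Inr (g, y0))"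
    using dist_corona_other_to_copy[OF assms(3) y0 assms(4,5)] by blast
  then show ?thesis
    unfolding resolves_def using assms(2,3) y0 dist_corona_root_copy
    by (intro bexI[of _ "Inr (g, y0)"]) auto
qed

lemma resolves_corona_between_copies:
  assumes "Y \<subseteq> verts H" "y0 \<in> Y" "g \<in> verts G" "g' \<in> verts G" "g \<noteq> g'"
    and "a \<in> verts H" "b \<in> verts H"
  shows "resolves (corona G H) (Inr ` (verts G \<times> Y)) (Inr (g, a)) (Inr (g', b))"
proof -
  have y0: "y0 \<in> verts H"
    using assms(1,2) by blast
  have "dist (corona G H) (Inr (g, a)) (Inr (g, y0)) \<le> 2"
    using dist_corona_copy capped_dist_le_2 assms y0 by simp
  then show ?thesis
    unfolding resolves_def using assms y0 dist_corona_between_copies[of g g' b y0]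
    by (intro bexI[of _ "Inr (g, y0)"]) auto
qed

lemma resolves_corona_same_copy:
  assumes Y: "capped_resolving_set H Y" and "g \<in> verts G"
    and ab: "a \<in> verts H" "b \<in> verts H" "a \<noteq> b" "\<not> adj H a b"
  shows "resolves (corona G H) (Inr ` (verts G \<times> Y)) (Inr (g, a)) (Inr (g, b))"
proof -
  obtain y where "y \<in> Y" "capped_dist H a y \<noteq> capped_dist H b y"
    using Y ab unfolding capped_resolving_set_def by blast
  moreover have "Y \<subseteq> verts H"
    using Y by (simp add: capped_resolving_set_def)
  ultimately show ?thesis
    unfolding resolves_def using assms dist_corona_copy
    by (intro bexI[of _ "Inr (g, y)"]) auto
qed

lemma nonlocal_resolving_set_corona:
  assumes Y: "capped_resolving_set H Y" "y0 \<in> Y"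
  shows "nonlocal_resolving_set (corona G H) (Inr ` (verts G \<times> Y))"
    (is "nonlocal_resolving_set _ ?X")
  unfolding nonlocal_resolving_set_def
proof (intro conjI ballI impI)
  have YH: "Y \<subseteq> verts H"
    using Y(1) by (simp add: capped_resolving_set_def)
  then show "?X \<subseteq> verts (corona G H)"
    by (auto simp: verts_corona)
  fix u v
  assume u: "u \<in> verts (corona G H)" and v: "v \<in> verts (corona G H)"
    and uv: "u \<noteq> v \<and> \<not> adj (corona G H) u v"
  have "\<not> adj (corona G H) v u"
    using uv simple_graph_corona[OF simple_G simple_H] by (auto simp: simple_graph_def)
  show "resolves (corona G H) ?X u v"
  proof (cases u)
    case (Inl g)
    then show ?thesis
      using resolves_corona_root[OF YH Y(2), of g v] u v uv by (auto simp: verts_corona)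
  next
    case (Inr p)
    then obtain g a where u_eq: "u = Inr (g, a)" "g \<in> verts G" "a \<in> verts H"
      using u by (auto simp: verts_corona)
    show ?thesis
    proof (cases v)
      case (Inl g')
      then show ?thesis
        using resolves_corona_root[OF YH Y(2), of g' u] resolves_commute[of "corona G H" ?X u v]
          u v uv \<open>\<not> adj (corona G H) v u\<close>
        by (auto simp: verts_corona)
    next
      case (Inr q)
      then obtain g' b where v_eq: "v = Inr (g', b)" "g' \<in> verts G" "b \<in> verts H"
        using v by (auto simp: verts_corona)
      show ?thesis
      proof (cases "g = g'")
        case True
        then show ?thesis
          using resolves_corona_same_copy[OF Y(1), of g a b] u_eq v_eq uv by auto
      next
        case False
        then show ?thesis
          using resolves_corona_between_copies[OF YH Y(2), of g g' a b] u_eq v_eq by auto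
      qed
    qed
  qed
qed

lemma nl_dim_corona:
  assumes "\<not> complete_graph H"
  shows "nl_dim (corona G H) = card (verts G) * capped_dim H"
proof -
  obtain Y where Y: "capped_resolving_set H Y" "card Y = capped_dim H"
    by (rule capped_dim_attained)
  then obtain y0 where "y0 \<in> Y"
    using capped_resolving_set_nonempty[OF assms] by blast
  show ?thesis
  proof (rule nl_dim_eqI)
    show "nonlocal_resolving_set (corona G H) (Inr ` (verts G \<times> Y))"
      using nonlocal_resolving_set_corona[OF Y(1) \<open>y0 \<in> Y\<close>] .
    show "card (Inr ` (verts G \<times> Y)) = card (verts G) * capped_dim H"
      using Y(2) by (simp add: card_image card_cartesian_product)
  next
    fix X
    assume X: "nonlocal_resolving_set (corona G H) X"
    have finite_copies: "finite {h. Inr (g, h) \<in> X}" if "g \<in> verts G" for g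
      using capped_resolving_set_corona_copy[OF X that] simple_H
      unfolding capped_resolving_set_def simple_graph_def by (meson finite_subset)
    have "card (verts G) * capped_dim H = (\<Sum>g\<in>verts G. capped_dim H)"
      by simp
    also have "\<dots> \<le> (\<Sum>g\<in>verts G. card {h. Inr (g, h) \<in> X})"
      by (intro sum_mono capped_dim_le capped_resolving_set_corona_copy[OF X])
    also have "\<dots> = card (SIGMA g:verts G. {h. Inr (g, h) \<in> X})"
      using simple_G finite_copies by (simp add: simple_graph_def card_SigmaI)
    also have "\<dots> \<le> card X"
      using nonlocal_resolving_set_finite[OF simple_graph_corona[OF simple_G simple_H] X]
      by (intro card_inj_on_le[of Inr]) auto
    finally show "card (verts G) * capped_dim H \<le> card X" .
  qed
qed

end

theorem theorem3p2:
  fixes G :: "'a graph" and H :: "'b graph"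
  assumes "simple_graph G" and "connected_graph G"
    and "simple_graph H" and "\<not> complete_graph H"
  shows "nl_dim (corona G H) = card (verts G) * nl_dim (join H K1)"
  using nl_dim_corona[OF assms] nl_dim_join_K1[OF assms(3)] by simp

end
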